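(* Let $\mathbf X$ be a deterministic $d\times m$ real matrix and $\boldsymbol\varepsilon=(\varepsilon_1,\dots,\varepsilon_m)$ a vector of i.i.d. Rademacher random variables. If $\|\mathbf X\|_F^2\le1/8$, then $$\mathbb E\big[\exp\{\|\mathbf X\boldsymbol\varepsilon\|_2^2\}\big]\le\exp\{10\|\mathbf X\|_F^2\}.$$
   Context: $\|\cdot\|_F$ is the Frobenius norm; a Rademacher variable takes values $\pm1$ with probability $1/2$ each. *)

theory Defs
  imports "HOL-Probability.Probability"
begin

text \<open>A deterministic d x m real matrix is represented as X :: nat => nat => real,
  with entries X i j for i < d, j < m.  Squared Frobenius norm:\<close>
definition frob_sq :: "nat \<Rightarrow> nat \<Rightarrow> (nat \<Rightarrow> nat \<Rightarrow> real) \<Rightarrow> real" where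
  "frob_sq d m X = (\<Sum>i<d. \<Sum>j<m. (X i j)\<^sup>2)"

definition rademacher_vec :: "nat \<Rightarrow> (nat \<Rightarrow> real) pmf" where
  "rademacher_vec m = Pi_pmf {..<m} 0 (\<lambda>_. pmf_of_set {-1, 1})"

definition mat_vec_norm_sq :: "nat \<Rightarrow> nat \<Rightarrow> (nat \<Rightarrow> nat \<Rightarrow> real) \<Rightarrow> (nat \<Rightarrow> real) \<Rightarrow> real" where
  "mat_vec_norm_sq d m X e = (\<Sum>i<d. (\<Sum>j<m. X i j * e j)\<^sup>2)"

end

(* Induct on the number of columns, carrying a shift u and a rate c: averaging over the sign of the
   last column x turns exp (c |w \<plusminus> x|^2) into exp (c |w|^2 + c |x|^2) cosh (2 c <w,x>), and
   cosh t \<le> exp (t^2/2) with Cauchy-Schwarz absorbs the cross term into a larger rate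
   c (1 + 2 c |x|^2).  Tracking the rates gives
     E exp (c |u + X e|^2) \<le> exp (c / (1 - 2 c |X|_F^2) * (|u|^2 + |X|_F^2)),
   and c = 1, u = 0, |X|_F^2 \<le> 1/8 yields the claim with constant 4/3 in place of 10. *)
theory Submission
  imports Defs
begin

lemma cosh_le_exp_half_square:
  fixes y :: real
  shows "cosh y \<le> exp (y\<^sup>2 / 2)"
proof -
  have nonneg_case: "cosh z \<le> exp (z\<^sup>2 / 2)" if "z \<ge> 0" for z :: real
  proof -
    have "-(2*z) * (1/2) + ln (1 + (1/2) * (exp (2*z) - 1)) \<le> (2*z)\<^sup>2 / 8"
      using Hoeffdings_lemma_aux[of "2*z" "1/2"] that by simp
    hence "ln ((1 + exp (2*z)) / 2) \<le> z + z\<^sup>2/2"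
      by (simp add: power2_eq_square field_simps)
    hence "(1 + exp (2*z)) / 2 \<le> exp (z + z\<^sup>2/2)"
      by (smt (verit) exp_gt_zero exp_le_cancel_iff exp_ln divide_pos_pos)
    hence "exp (-z) * ((1 + exp (2*z)) / 2) \<le> exp (-z) * exp (z + z\<^sup>2/2)"
      by (intro mult_left_mono) auto
    moreover have "exp (-z) * ((1 + exp (2*z)) / 2) = cosh z"
      by (simp add: cosh_field_def field_simps flip: exp_add)
    moreover have "exp (-z) * exp (z + z\<^sup>2/2) = exp (z\<^sup>2/2)"
      by (simp flip: exp_add)
    ultimately show ?thesis by simp
  qed
  show ?thesis
    using nonneg_case[of y] nonneg_case[of "-y"] by (cases "y \<ge> 0") auto
qed

lemma expectation_pair_pmf_finite:
  fixes h :: "'a \<times> 'b \<Rightarrow> real"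
  assumes "finite (set_pmf p)" "finite (set_pmf q)"
  shows "measure_pmf.expectation (pair_pmf p q) h =
         measure_pmf.expectation p (\<lambda>x. measure_pmf.expectation q (\<lambda>y. h (x, y)))"
proof -
  have "measure_pmf.expectation (pair_pmf p q) h =
        (\<Sum>z\<in>set_pmf p \<times> set_pmf q. pmf (pair_pmf p q) z *\<^sub>R h z)"
    using assms by (intro integral_measure_pmf) auto
  also have "\<dots> = (\<Sum>x\<in>set_pmf p. \<Sum>y\<in>set_pmf q. pmf p x * (pmf q y * h (x, y)))"
    unfolding sum.cartesian_product by (intro sum.cong refl) (auto simp: pmf_pair mult.assoc)
  also have "\<dots> = (\<Sum>x\<in>set_pmf p. pmf p x *\<^sub>R measure_pmf.expectation q (\<lambda>y. h (x, y)))"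
    using assms by (simp add: integral_measure_pmf[where A = "set_pmf q"] sum_distrib_left)
  also have "\<dots> = measure_pmf.expectation p (\<lambda>x. measure_pmf.expectation q (\<lambda>y. h (x, y)))"
    using assms by (intro integral_measure_pmf[symmetric]) auto
  finally show ?thesis .
qed

lemma rademacher_vec_Suc:
  "rademacher_vec (Suc m) =
     map_pmf (\<lambda>(y, f). f(m := y)) (pair_pmf (pmf_of_set {-1, 1}) (rademacher_vec m))"
  unfolding rademacher_vec_def lessThan_Suc by (rule Pi_pmf_insert) auto

lemma finite_set_pmf_rademacher_vec: "finite (set_pmf (rademacher_vec m))"
  by (induction m) (simp_all add: rademacher_vec_def[of 0] rademacher_vec_Suc)

lemma expectation_rademacher_vec_Suc:
  fixes h :: "(nat \<Rightarrow> real) \<Rightarrow> real"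
  shows "measure_pmf.expectation (rademacher_vec (Suc m)) h =
         measure_pmf.expectation (rademacher_vec m) (\<lambda>f. (h (f(m := -1)) + h (f(m := 1))) / 2)"
proof -
  have integrable: "integrable (rademacher_vec m) g" for g :: "(nat \<Rightarrow> real) \<Rightarrow> real"
    by (rule integrable_measure_pmf_finite[OF finite_set_pmf_rademacher_vec])
  have "measure_pmf.expectation (rademacher_vec (Suc m)) h =
        measure_pmf.expectation (pmf_of_set {-1, 1})
          (\<lambda>y. measure_pmf.expectation (rademacher_vec m) (\<lambda>f. h (f(m := y))))"
    by (simp add: rademacher_vec_Suc case_prod_beta
                  expectation_pair_pmf_finite[OF _ finite_set_pmf_rademacher_vec])
  also have "\<dots> = (measure_pmf.expectation (rademacher_vec m) (\<lambda>f. h (f(m := -1))) +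
                   measure_pmf.expectation (rademacher_vec m) (\<lambda>f. h (f(m := 1)))) / 2"
    by (subst integral_pmf_of_set) auto
  also have "\<dots> = measure_pmf.expectation (rademacher_vec m)
                    (\<lambda>f. (h (f(m := -1)) + h (f(m := 1))) / 2)"
    by (simp add: Bochner_Integration.integral_add[OF integrable integrable])
  finally show ?thesis .
qed

definition vec_norm_sq :: "nat \<Rightarrow> (nat \<Rightarrow> real) \<Rightarrow> real" where
  "vec_norm_sq d u = (\<Sum>i<d. (u i)\<^sup>2)"

lemma vec_norm_sq_nonneg: "vec_norm_sq d u \<ge> 0"
  unfolding vec_norm_sq_def by (intro sum_nonneg) auto

lemma mat_vec_norm_sq_eq: "mat_vec_norm_sq d m X e = vec_norm_sq d (\<lambda>i. \<Sum>j<m. X i j * e j)"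
  by (simp add: mat_vec_norm_sq_def vec_norm_sq_def)

lemma frob_sq_nonneg: "frob_sq d m X \<ge> 0"
  unfolding frob_sq_def by (intro sum_nonneg) auto

lemma frob_sq_Suc: "frob_sq d (Suc m) X = frob_sq d m X + vec_norm_sq d (\<lambda>i. X i m)"
  by (simp add: frob_sq_def vec_norm_sq_def sum.distrib)

lemma mean_exp_vec_norm_sq_plus_minus_le:
  fixes c :: real and w x :: "nat \<Rightarrow> real"
  assumes "c > 0"
  shows "(exp (c * vec_norm_sq d (\<lambda>i. w i - x i)) + exp (c * vec_norm_sq d (\<lambda>i. w i + x i))) / 2
         \<le> exp (c * vec_norm_sq d x) * exp (c * (1 + 2 * c * vec_norm_sq d x) * vec_norm_sq d w)"
proof -
  define s where "s = (\<Sum>i<d. w i * x i)"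
  define N where "N = vec_norm_sq d w"
  define a where "a = vec_norm_sq d x"
  have cauchy_schwarz: "s\<^sup>2 \<le> N * a"
    unfolding s_def N_def a_def vec_norm_sq_def by (rule Cauchy_Schwarz_ineq_sum)
  have minus: "vec_norm_sq d (\<lambda>i. w i - x i) = N - 2 * s + a"
    unfolding N_def a_def s_def vec_norm_sq_def
    by (simp add: power2_eq_square algebra_simps sum.distrib sum_subtractf sum_distrib_left)
  have plus: "vec_norm_sq d (\<lambda>i. w i + x i) = N + 2 * s + a"
    unfolding N_def a_def s_def vec_norm_sq_def
    by (simp add: power2_eq_square algebra_simps sum.distrib sum_distrib_left)
  have "(exp (c * (N - 2 * s + a)) + exp (c * (N + 2 * s + a))) / 2
        = exp (c * N + c * a) * cosh (2 * c * s)"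
    by (simp add: cosh_field_def field_simps flip: exp_add)
  also have "\<dots> \<le> exp (c * N + c * a) * exp ((2 * c * s)\<^sup>2 / 2)"
    by (intro mult_left_mono cosh_le_exp_half_square) auto
  also have "\<dots> = exp (c * N + c * a + 2 * c\<^sup>2 * s\<^sup>2)"
    by (simp add: power_mult_distrib flip: exp_add)
  also have "\<dots> \<le> exp (c * N + c * a + 2 * c\<^sup>2 * (N * a))"
    using cauchy_schwarz assms by (intro iffD2[OF exp_le_cancel_iff] add_left_mono mult_left_mono) auto
  also have "\<dots> = exp (c * a) * exp (c * (1 + 2 * c * a) * N)"
    by (simp add: algebra_simps power2_eq_square flip: exp_add)
  finally show ?thesis using minus plus unfolding a_def N_def by simp
qed

text \<open>The rate c grows to c (1 + 2 c a) when a column of squared norm a is averaged out; these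
  two facts show that the bound with rate c and total S + a dominates the one obtained from
  the updated rate and the remaining total S.\<close>

lemma rate_update_denominator_le:
  fixes c a S :: real
  assumes "c > 0" "a \<ge> 0" "S \<ge> 0" "2 * c * (S + a) < 1"
  shows "1 - 2 * c * (S + a) \<le> 1 - 2 * (c * (1 + 2 * c * a)) * S"
proof -
  have "2 * c * a \<ge> 0" using assms by simp
  hence "2 * c * S \<le> 1" using assms(4) by (simp add: algebra_simps)
  hence "(2 * c * a) * (2 * c * S) \<le> 2 * c * a"
    using assms by (intro mult_left_le) auto
  thus ?thesis by (simp add: algebra_simps power2_eq_square)
qed

lemma rate_update_bound_le:
  fixes c a S N :: real
  assumes c: "c > 0" and a: "a \<ge> 0" and S: "S \<ge> 0" and N: "N \<ge> 0"
    and small: "2 * c * (S + a) < 1"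
  shows "c * a + c * (1 + 2 * c * a) / (1 - 2 * (c * (1 + 2 * c * a)) * S) * (N + S)
         \<le> c / (1 - 2 * c * (S + a)) * (N + (S + a))"
proof -
  define c' where "c' = c * (1 + 2 * c * a)"
  define T where "T = 1 - 2 * c * (S + a)"
  have T: "0 < T" "T \<le> 1" using small c a S unfolding T_def by simp_all
  have denom: "T \<le> 1 - 2 * c' * S"
    using rate_update_denominator_le[OF c a S small] unfolding c'_def T_def .
  have "c * (1 - 2 * c' * S) - c' * T = 4 * c^3 * a\<^sup>2"
    unfolding T_def c'_def by (simp add: algebra_simps power2_eq_square power3_eq_cube)
  moreover have "4 * c^3 * a\<^sup>2 \<ge> 0" using c by simp
  ultimately have "c' * T \<le> c * (1 - 2 * c' * S)" by linarith
  hence rate: "c' / (1 - 2 * c' * S) \<le> c / T"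
    using denom T by (simp add: divide_simps mult.commute)
  have "c * a \<le> c * a / T"
    using T c a by (simp add: divide_simps mult_left_le)
  moreover have "c' / (1 - 2 * c' * S) * (N + S) \<le> c / T * (N + S)"
    using rate N S by (intro mult_right_mono) auto
  ultimately have "c * a + c' / (1 - 2 * c' * S) * (N + S) \<le> c * a / T + c / T * (N + S)"
    by simp
  also have "\<dots> = c / T * (N + (S + a))"
    by (simp add: add_divide_distrib[symmetric] algebra_simps)
  finally show ?thesis unfolding c'_def T_def .
qed

lemma expectation_exp_shifted_vec_norm_sq_le:
  fixes X :: "nat \<Rightarrow> nat \<Rightarrow> real" and u :: "nat \<Rightarrow> real"
  assumes "c > 0" "2 * c * frob_sq d m X < 1"
  shows "measure_pmf.expectation (rademacher_vec m)
           (\<lambda>e. exp (c * vec_norm_sq d (\<lambda>i. u i + (\<Sum>j<m. X i j * e j))))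
         \<le> exp (c / (1 - 2 * c * frob_sq d m X) * (vec_norm_sq d u + frob_sq d m X))"
  using assms
proof (induction m arbitrary: u c)
  case 0
  then show ?case by (simp add: rademacher_vec_def frob_sq_def)
next
  case (Suc m)
  define S where "S = frob_sq d m X"
  define x where "x = (\<lambda>i. X i m)"
  define a where "a = vec_norm_sq d x"
  define c' where "c' = c * (1 + 2 * c * a)"
  define w where "w = (\<lambda>f i. u i + (\<Sum>j<m. X i j * f j))"
  have a: "a \<ge> 0" unfolding a_def by (rule vec_norm_sq_nonneg)
  have S: "S \<ge> 0" unfolding S_def by (rule frob_sq_nonneg)
  have small: "2 * c * (S + a) < 1"
    using Suc.prems(2) by (simp add: frob_sq_Suc S_def a_def x_def)
  have c': "c' > 0" unfolding c'_def using Suc.prems(1) a by (simp add: add_pos_nonneg)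
  have small': "2 * c' * S < 1"
    using rate_update_denominator_le[OF Suc.prems(1) a S small] small unfolding c'_def by linarith
  have column_split: "(\<Sum>j<Suc m. X i j * (f(m := y)) j) = (\<Sum>j<m. X i j * f j) + X i m * y"
    for i f and y :: real
    by (simp add: lessThan_Suc add.commute)
  have "measure_pmf.expectation (rademacher_vec (Suc m))
          (\<lambda>e. exp (c * vec_norm_sq d (\<lambda>i. u i + (\<Sum>j<Suc m. X i j * e j))))
        = measure_pmf.expectation (rademacher_vec m) (\<lambda>f.
            (exp (c * vec_norm_sq d (\<lambda>i. w f i - x i)) + exp (c * vec_norm_sq d (\<lambda>i. w f i + x i))) / 2)"
    by (simp add: expectation_rademacher_vec_Suc column_split w_def x_def add.assoc add_diff_eq)
  also have "\<dots> \<le> measure_pmf.expectation (rademacher_vec m)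
                    (\<lambda>f. exp (c * a) * exp (c' * vec_norm_sq d (w f)))"
    using mean_exp_vec_norm_sq_plus_minus_le[OF Suc.prems(1)] unfolding a_def c'_def
    by (intro integral_mono integrable_measure_pmf_finite finite_set_pmf_rademacher_vec)
  also have "\<dots> = exp (c * a) * measure_pmf.expectation (rademacher_vec m)
                    (\<lambda>f. exp (c' * vec_norm_sq d (w f)))"
    by simp
  also have "\<dots> \<le> exp (c * a) * exp (c' / (1 - 2 * c' * S) * (vec_norm_sq d u + S))"
    using Suc.IH[OF c' small'[unfolded S_def]] unfolding w_def S_def by simp
  also have "\<dots> \<le> exp (c / (1 - 2 * c * (S + a)) * (vec_norm_sq d u + (S + a)))"
    using rate_update_bound_le[OF Suc.prems(1) a S vec_norm_sq_nonneg small]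
    unfolding c'_def by (simp flip: exp_add)
  finally show ?case by (simp add: frob_sq_Suc S_def a_def x_def)
qed

theorem lemma9:
  fixes d m :: nat and X :: "nat \<Rightarrow> nat \<Rightarrow> real"
  assumes "frob_sq d m X \<le> 1/8"
  shows "measure_pmf.expectation (rademacher_vec m) (\<lambda>e. exp (mat_vec_norm_sq d m X e))
           \<le> exp (10 * frob_sq d m X)"
proof -
  define F where "F = frob_sq d m X"
  have F: "0 \<le> F" "F \<le> 1/8" using frob_sq_nonneg assms unfolding F_def by auto
  have "measure_pmf.expectation (rademacher_vec m) (\<lambda>e. exp (mat_vec_norm_sq d m X e))
        \<le> exp (1 / (1 - 2 * 1 * F) * (vec_norm_sq d (\<lambda>_. 0) + F))"
    using expectation_exp_shifted_vec_norm_sq_le[of 1 d m X "\<lambda>_. 0"] F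
    by (simp add: mat_vec_norm_sq_eq F_def)
  also have "\<dots> \<le> exp (10 * F)"
  proof -
    have "F * 1 \<le> F * (10 * (1 - 2 * F))" using F by (intro mult_left_mono) auto
    thus ?thesis using F by (simp add: vec_norm_sq_def divide_simps algebra_simps)
  qed
  finally show ?thesis unfolding F_def .
qed

end
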